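(* Let $\mathrm{Jac}_{\bf f}(x)$ denote the $n\times m$ Jacobian matrix of ${\bf f}$ at $x$ (entry $(i,j)$ is $\partial f_j/\partial x_i$). Then $$\mathcal{R}^{lin}_{\bf f}=\bigcup_{x\in V_{\bf f}}\Big(\tfrac12\,\mathrm{Jac}_{\bf f}(x)\cdot \mathrm{S}^{lin}_{\bf f}\Big)\qquad\text{and}\qquad \mathcal{R}^{ed}_{\bf f}=\bigcup_{x\in V_{\bf f}}\Big(x-\tfrac12\,\mathrm{Jac}_{\bf f}(x)\cdot\mathrm{S}^{ed}_{\bf f}\Big),$$ and both unions are disjoint.
   Context: Let ${\bf f}=(f_1,\dots,f_m)$ with $f_i(x)=x^TA_ix+2a_i^Tx+\alpha_i$, $A_i$ real symmetric $n\times n$, $a_i\in\mathbb{R}^n$, $\alpha_i\in\mathbb{R}$, and $V_{\bf f}=\{x\in\mathbb{R}^n: f_1(x)=\dots=f_m(x)=0\}$. For $(C,c)\in\mathcal{S}^n\times\mathbb{R}^n$, write $H(\lambda)=C-\sum_i\lambda_iA_i$; the SDP-exact region $\mathcal{R}_{\bf f}$ is the set of $(C,c)$ (identified with $\begin{bmatrix}0&c^T\\c&C\end{bmatrix}$) for which there are $x\in V_{\bf f}$, $\lambda\in\mathbb{R}^m$ with $H(\lambda)\succ0$ and $c-\sum_i\lambda_ia_i+H(\lambda)x=0$. Define $\mathcal{R}^{lin}_{\bf f}=\{u\in\mathbb{R}^n:(C,c)=(0,u)\in\mathcal{R}_{\bf f}\}$ (SDP-exact region for minimizing $u^Tx$ on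 $V_{\bf f}$) and $\mathcal{R}^{ed}_{\bf f}=\{u\in\mathbb{R}^n:(C,c)=(I_n,-u)\in\mathcal{R}_{\bf f}\}$ (SDP-exact region for minimizing $\|x-u\|^2$ on $V_{\bf f}$). The master spectrahedra are $\mathrm{S}^{lin}_{\bf f}=\{\lambda\in\mathbb{R}^m:\sum_i\lambda_iA_i\prec0\}$ and $\mathrm{S}^{ed}_{\bf f}=\{\lambda\in\mathbb{R}^m:\sum_i\lambda_iA_i\prec I_n\}$. *)

theory Defs
  imports "HOL-Analysis.Analysis"
begin

definition quad :: "('m::finite \<Rightarrow> real^'n::finite^'n) \<Rightarrow> ('m \<Rightarrow> real^'n) \<Rightarrow> ('m \<Rightarrow> real)
    \<Rightarrow> real^'n \<Rightarrow> real^'m" where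
  "quad A a \<alpha> x = (\<chi> i. x \<bullet> (A i *v x) + 2 * (a i \<bullet> x) + \<alpha> i)"

definition variety :: "('m::finite \<Rightarrow> real^'n::finite^'n) \<Rightarrow> ('m \<Rightarrow> real^'n) \<Rightarrow> ('m \<Rightarrow> real)
    \<Rightarrow> (real^'n) set" where
  "variety A a \<alpha> = {x. quad A a \<alpha> x = 0}"

text \<open>Jacobian: n x m matrix, entry (i,j) = d f_j / d x_i (transpose of the
  matrix of the Frechet derivative of f : R^n -> R^m).\<close>
definition jac :: "(real^'n::finite \<Rightarrow> real^'m::finite) \<Rightarrow> real^'n \<Rightarrow> real^'m^'n" where
  "jac f x = transpose (matrix (frechet_derivative f (at x)))"

definition posdef :: "real^'n::finite^'n \<Rightarrow> bool" where
  "posdef H \<longleftrightarrow> transpose H = H \<and> (\<forall>v. v \<noteq> 0 \<longrightarrow> v \<bullet> (H *v v) > 0)"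

definition Hmat :: "('m::finite \<Rightarrow> real^'n::finite^'n) \<Rightarrow> real^'n^'n \<Rightarrow> real^'m \<Rightarrow> real^'n^'n" where
  "Hmat A C l = C - (\<Sum>i\<in>UNIV. l $ i *\<^sub>R A i)"

definition sdp_exact_region :: "('m::finite \<Rightarrow> real^'n::finite^'n) \<Rightarrow> ('m \<Rightarrow> real^'n) \<Rightarrow> ('m \<Rightarrow> real)
    \<Rightarrow> ((real^'n^'n) \<times> (real^'n)) set" where
  "sdp_exact_region A a \<alpha> = {(C, c). transpose C = C \<and>
     (\<exists>x \<in> variety A a \<alpha>. \<exists>l :: real^'m. posdef (Hmat A C l) \<and>
        c - (\<Sum>i\<in>UNIV. l $ i *\<^sub>R a i) + Hmat A C l *v x = 0)}"

definition R_lin :: "('m::finite \<Rightarrow> real^'n::finite^'n) \<Rightarrow> ('m \<Rightarrow> real^'n) \<Rightarrow> ('m \<Rightarrow> real) \<Rightarrow> (real^'n) set" where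
  "R_lin A a \<alpha> = {u. (0, u) \<in> sdp_exact_region A a \<alpha>}"

definition R_ed :: "('m::finite \<Rightarrow> real^'n::finite^'n) \<Rightarrow> ('m \<Rightarrow> real^'n) \<Rightarrow> ('m \<Rightarrow> real) \<Rightarrow> (real^'n) set" where
  "R_ed A a \<alpha> = {u. (mat 1, - u) \<in> sdp_exact_region A a \<alpha>}"

text \<open>Master spectrahedra. Sum l_i A_i < 0 means -(sum) positive definite;
  Sum l_i A_i < I means I - sum positive definite.\<close>
definition S_lin :: "('m::finite \<Rightarrow> real^'n::finite^'n) \<Rightarrow> (real^'m) set" where
  "S_lin A = {l. posdef (- (\<Sum>i\<in>UNIV. l $ i *\<^sub>R A i))}"

definition S_ed :: "('m::finite \<Rightarrow> real^'n::finite^'n) \<Rightarrow> (real^'m) set" where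
  "S_ed A = {l. posdef (mat 1 - (\<Sum>i\<in>UNIV. l $ i *\<^sub>R A i))}"

end

theory Submission
  imports Defs
begin

(* For l in R^m let g_l = sum_i l_i f_i, a quadratic with Hessian 2 sum_i l_i A_i. Then
   (1/2) Jac(x) l = (sum_i l_i A_i) x + sum_i l_i a_i is half the gradient of g_l at x, and the
   stationarity condition in the definition of the SDP-exact region says precisely that u is
   of the claimed form. For disjointness: g_l vanishes at any two points x ~= y of V, so
   expanding g_l(y) around x gives
     (1/2) grad g_l(x) . (y - x) = -(1/2) (y - x)^T (sum_i l_i A_i) (y - x).
   If l lies in S^lin the right-hand side is positive, and no u satisfies both u . (y - x) > 0
   and u . (x - y) > 0. If l lies in S^ed it shows that u = x - (1/2) grad g_l(x) is strictly
   closer to x than to any other point of V, so u determines x. *)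

lemma matrix_vector_mult_sum_left:
  fixes M :: "'i \<Rightarrow> real^'n::finite^'k::finite"
  shows "(\<Sum>i\<in>S. M i) *v x = (\<Sum>i\<in>S. M i *v x)"
  by (induct S rule: infinite_finite_induct) (auto simp: matrix_vector_mult_add_rdistrib)

lemma matrix_vector_mult_uminus_left:
  fixes M :: "real^'n::finite^'k::finite"
  shows "(- M) *v x = - (M *v x)"
  by (simp add: vec_eq_iff matrix_vector_mult_def sum_negf)

lemma transpose_zero [simp]: "transpose 0 = 0"
  by (simp add: transpose_def vec_eq_iff)

lemma inner_matrix_vector_symmetric:
  fixes M :: "real^'n::finite^'n"
  assumes "transpose M = M"
  shows "x \<bullet> (M *v y) = y \<bullet> (M *v x)"
  by (metis assms dot_lmul_matrix inner_commute vector_transpose_matrix)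

lemma inner_vec_lambda: "l \<bullet> (\<chi> i. g i) = (\<Sum>i\<in>UNIV. l $ i * g i)"
  by (simp add: inner_vec_def)

lemma quadratic_expansion:
  fixes M :: "real^'n::finite^'n"
  assumes "transpose M = M"
  shows "(x + d) \<bullet> (M *v (x + d)) + 2 * (b \<bullet> (x + d))
    = x \<bullet> (M *v x) + 2 * (b \<bullet> x) + 2 * ((M *v x + b) \<bullet> d) + d \<bullet> (M *v d)"
  using inner_matrix_vector_symmetric[OF assms, of x d]
  by (simp add: matrix_vector_right_distrib inner_add_left inner_add_right inner_commute)

definition lincomb :: "('m::finite \<Rightarrow> 'b::real_vector) \<Rightarrow> real^'m \<Rightarrow> 'b" where
  "lincomb F l = (\<Sum>i\<in>UNIV. l $ i *\<^sub>R F i)"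

lemma lincomb_matrix_vector_mult:
  fixes A :: "'m::finite \<Rightarrow> real^'n::finite^'k::finite"
  shows "lincomb A l *v x = lincomb (\<lambda>i. A i *v x) l"
  by (simp add: lincomb_def matrix_vector_mult_sum_left scaleR_matrix_vector_assoc)

lemma transpose_lincomb:
  fixes A :: "'m::finite \<Rightarrow> real^'n::finite^'k::finite"
  shows "transpose (lincomb A l) = lincomb (\<lambda>i. transpose (A i)) l"
  by (simp add: lincomb_def transpose_def vec_eq_iff)

lemma quad_has_derivative:
  "(quad A a \<alpha> has_derivative
     (\<lambda>h. \<chi> i. x \<bullet> (A i *v h) + h \<bullet> (A i *v x) + 2 * (a i \<bullet> h))) (at x)"
proof -
  have components: "((\<lambda>y. quad A a \<alpha> y \<bullet> axis i 1) has_derivative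
      (\<lambda>h. (\<chi> i. x \<bullet> (A i *v h) + h \<bullet> (A i *v x) + 2 * (a i \<bullet> h)) \<bullet> axis i 1)) (at x)" for i
  proof -
    have "bounded_linear ((*v) (A i))"
      by (simp add: linear_conv_bounded_linear)
    note [derivative_intros] = bounded_linear_imp_has_derivative[OF this]
    have "((\<lambda>y. y \<bullet> (A i *v y) + 2 * (a i \<bullet> y) + \<alpha> i) has_derivative
        (\<lambda>h. x \<bullet> (A i *v h) + h \<bullet> (A i *v x) + 2 * (a i \<bullet> h))) (at x)"
      by (auto intro!: derivative_eq_intros)
    then show ?thesis
      by (simp add: quad_def inner_axis)
  qed
  show ?thesis
    by (rule has_derivative_componentwise_within[THEN iffD2])
      (use components in \<open>auto simp: Basis_vec_def\<close>)
qed

lemma half_jac_quad: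
  fixes A :: "'m::finite \<Rightarrow> real^'n::finite^'n"
  assumes symA: "\<And>i. transpose (A i) = A i"
  shows "(1/2) *\<^sub>R (jac (quad A a \<alpha>) x *v l) = lincomb A l *v x + lincomb a l"
proof -
  let ?D = "\<lambda>h. \<chi> i. x \<bullet> (A i *v h) + h \<bullet> (A i *v x) + 2 * (a i \<bullet> h)"
  have D: "frechet_derivative (quad A a \<alpha>) (at x) = ?D"
    using quad_has_derivative by (rule frechet_derivative_at[symmetric])
  have "bounded_linear ?D"
    using quad_has_derivative by (rule has_derivative_bounded_linear)
  then have "(jac (quad A a \<alpha>) x *v l) \<bullet> h = l \<bullet> ?D h" for h
    by (simp add: jac_def D dot_lmul_matrix)
  also have "l \<bullet> ?D h = (2 *\<^sub>R (lincomb A l *v x + lincomb a l)) \<bullet> h" for h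
  proof -
    have "x \<bullet> (A i *v h) + h \<bullet> (A i *v x) + 2 * (a i \<bullet> h) = 2 * ((A i *v x + a i) \<bullet> h)" for i
      using inner_matrix_vector_symmetric[OF symA, of x i h]
      by (simp add: inner_add_left inner_add_right inner_commute)
    moreover have "lincomb (\<lambda>i. A i *v x) l + lincomb a l = lincomb (\<lambda>i. A i *v x + a i) l"
      by (simp add: lincomb_def scaleR_add_right sum.distrib)
    ultimately show ?thesis
      unfolding inner_vec_lambda lincomb_matrix_vector_mult
      by (simp add: lincomb_def inner_sum_left sum_distrib_left mult.left_commute)
  qed
  finally have "jac (quad A a \<alpha>) x *v l = 2 *\<^sub>R (lincomb A l *v x + lincomb a l)"
    using vector_eq_rdot by blast
  then show ?thesis
    by simp
qed

lemma inner_quad: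
  "l \<bullet> quad A a \<alpha> x = x \<bullet> (lincomb A l *v x) + 2 * (lincomb a l \<bullet> x) + lincomb \<alpha> l"
proof -
  have "l \<bullet> quad A a \<alpha> x = (\<Sum>i\<in>UNIV. l $ i * (x \<bullet> (A i *v x) + 2 * (a i \<bullet> x) + \<alpha> i))"
    by (simp add: inner_vec_def quad_def)
  then show ?thesis
    unfolding lincomb_matrix_vector_mult
    by (simp add: lincomb_def inner_sum_right inner_sum_left sum_distrib_left sum.distrib algebra_simps)
qed

lemma inner_half_gradient_variety_diff:
  fixes A :: "'m::finite \<Rightarrow> real^'n::finite^'n"
  assumes symA: "\<And>i. transpose (A i) = A i"
    and x: "x \<in> variety A a \<alpha>" and y: "y \<in> variety A a \<alpha>"
  shows "(lincomb A l *v x + lincomb a l) \<bullet> (y - x) = - (1/2) * ((y - x) \<bullet> (lincomb A l *v (y - x)))"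
proof -
  have "transpose (lincomb A l) = lincomb A l"
    using symA by (simp add: transpose_lincomb)
  note expansion = quadratic_expansion[OF this, of x "y - x" "lincomb a l"]
  have "l \<bullet> quad A a \<alpha> z = 0" if "z \<in> variety A a \<alpha>" for z
    using that by (simp add: variety_def)
  from this[OF x] this[OF y] expansion show ?thesis
    by (simp add: inner_quad)
qed

lemma R_lin_eq:
  "R_lin A a \<alpha> = (\<Union>x\<in>variety A a \<alpha>. (\<lambda>l. lincomb A l *v x + lincomb a l) ` S_lin A)"
proof -
  have "u - lincomb a l + (- lincomb A l) *v x = 0 \<longleftrightarrow> u = lincomb A l *v x + lincomb a l" for u l x
    by (auto simp: matrix_vector_mult_uminus_left diff_eq_eq)
  then show ?thesis
    by (auto simp: R_lin_def sdp_exact_region_def Hmat_def S_lin_def lincomb_def[symmetric])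
qed

lemma R_ed_eq:
  "R_ed A a \<alpha> = (\<Union>x\<in>variety A a \<alpha>. (\<lambda>l. x - (lincomb A l *v x + lincomb a l)) ` S_ed A)"
proof -
  have "- u - lincomb a l + (mat 1 - lincomb A l) *v x = 0 \<longleftrightarrow>
      u = x - (lincomb A l *v x + lincomb a l)" for u l x
    by (auto simp: algebra_simps)
  then show ?thesis
    by (auto simp: R_ed_def sdp_exact_region_def Hmat_def S_ed_def lincomb_def[symmetric])
qed

lemma S_lin_half_gradient_inner_pos:
  fixes A :: "'m::finite \<Rightarrow> real^'n::finite^'n"
  assumes symA: "\<And>i. transpose (A i) = A i"
    and "x \<in> variety A a \<alpha>" "y \<in> variety A a \<alpha>" "x \<noteq> y" "l \<in> S_lin A"
  shows "(lincomb A l *v x + lincomb a l) \<bullet> (y - x) > 0"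
proof -
  have "(y - x) \<bullet> ((- lincomb A l) *v (y - x)) > 0"
    using assms by (simp add: S_lin_def posdef_def lincomb_def)
  then show ?thesis
    using inner_half_gradient_variety_diff[OF assms(1-3)]
    by (simp add: matrix_vector_mult_uminus_left)
qed

lemma disjoint_R_lin_fibres:
  fixes A :: "'m::finite \<Rightarrow> real^'n::finite^'n"
  assumes symA: "\<And>i. transpose (A i) = A i"
  shows "disjoint_family_on (\<lambda>x. (\<lambda>l. lincomb A l *v x + lincomb a l) ` S_lin A) (variety A a \<alpha>)"
proof (unfold disjoint_family_on_def, intro ballI impI)
  fix x y assume xy: "x \<in> variety A a \<alpha>" "y \<in> variety A a \<alpha>" "x \<noteq> y"
  have "lincomb A l *v x + lincomb a l \<noteq> lincomb A m *v y + lincomb a m"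
    if "l \<in> S_lin A" "m \<in> S_lin A" for l m
    using S_lin_half_gradient_inner_pos[OF symA xy that(1)]
      S_lin_half_gradient_inner_pos[OF symA xy(2,1) xy(3)[symmetric] that(2)]
    by (auto simp: inner_diff_right)
  then show "(\<lambda>l. lincomb A l *v x + lincomb a l) ` S_lin A \<inter>
      (\<lambda>l. lincomb A l *v y + lincomb a l) ` S_lin A = {}"
    by blast
qed

lemma S_ed_nearest_point:
  fixes A :: "'m::finite \<Rightarrow> real^'n::finite^'n"
  assumes symA: "\<And>i. transpose (A i) = A i"
    and "x \<in> variety A a \<alpha>" "y \<in> variety A a \<alpha>" "x \<noteq> y" "l \<in> S_ed A"
  defines "u \<equiv> x - (lincomb A l *v x + lincomb a l)"
  shows "dist u x < dist u y"
proof -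
  define d where "d = y - x"
  have "d \<bullet> ((mat 1 - lincomb A l) *v d) > 0"
    using assms by (simp add: S_ed_def posdef_def lincomb_def d_def)
  then have "d \<bullet> (lincomb A l *v d) < d \<bullet> d"
    by (simp add: matrix_vector_mult_diff_rdistrib inner_diff_right)
  moreover have "(u - y) \<bullet> (u - y) = (u - x) \<bullet> (u - x) + d \<bullet> d - d \<bullet> (lincomb A l *v d)"
    using inner_half_gradient_variety_diff[OF assms(1-3), of l]
    by (simp add: u_def d_def inner_commute algebra_simps)
  ultimately show ?thesis
    by (simp add: dist_norm norm_lt)
qed

lemma disjoint_R_ed_fibres:
  fixes A :: "'m::finite \<Rightarrow> real^'n::finite^'n"
  assumes symA: "\<And>i. transpose (A i) = A i"
  shows "disjoint_family_on (\<lambda>x. (\<lambda>l. x - (lincomb A l *v x + lincomb a l)) ` S_ed A)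
    (variety A a \<alpha>)"
proof (unfold disjoint_family_on_def, intro ballI impI)
  fix x y assume xy: "x \<in> variety A a \<alpha>" "y \<in> variety A a \<alpha>" "x \<noteq> y"
  have "x - (lincomb A l *v x + lincomb a l) \<noteq> y - (lincomb A m *v y + lincomb a m)"
    if "l \<in> S_ed A" "m \<in> S_ed A" for l m
    using S_ed_nearest_point[OF symA xy that(1)]
      S_ed_nearest_point[OF symA xy(2,1) xy(3)[symmetric] that(2)]
    by (metis order.asym)
  then show "(\<lambda>l. x - (lincomb A l *v x + lincomb a l)) ` S_ed A \<inter>
      (\<lambda>l. y - (lincomb A l *v y + lincomb a l)) ` S_ed A = {}"
    by blast
qed

theorem theorem4p1:
  fixes A :: "'m::finite \<Rightarrow> real^'n::finite^'n" and a :: "'m \<Rightarrow> real^'n" and \<alpha> :: "'m \<Rightarrow> real"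
  assumes symA: "\<And>i. transpose (A i) = A i"
  shows "(R_lin A a \<alpha> = (\<Union>x\<in>variety A a \<alpha>. (\<lambda>l. (1/2) *\<^sub>R (jac (quad A a \<alpha>) x *v l)) ` S_lin A)) \<and>
    disjoint_family_on (\<lambda>x. (\<lambda>l. (1/2) *\<^sub>R (jac (quad A a \<alpha>) x *v l)) ` S_lin A) (variety A a \<alpha>) \<and>
    (R_ed A a \<alpha> = (\<Union>x\<in>variety A a \<alpha>. (\<lambda>l. x - (1/2) *\<^sub>R (jac (quad A a \<alpha>) x *v l)) ` S_ed A)) \<and>
    disjoint_family_on (\<lambda>x. (\<lambda>l. x - (1/2) *\<^sub>R (jac (quad A a \<alpha>) x *v l)) ` S_ed A) (variety A a \<alpha>)"
  by (simp only: half_jac_quad[OF symA] R_lin_eq R_ed_eq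
      disjoint_R_lin_fibres[OF symA] disjoint_R_ed_fibres[OF symA] simp_thms)

end
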